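(* For a single-cell region ($n_x=n_y=n_z=1$) formed by the primary cell with corners $(i,j,k)$ and $(i+1,j+1,k+1)$, carrying potential values $U_{i+a,j+b,k+c}$, $a,b,c\in\{0,1\}$, at its eight nodes, let $$\Delta t^{(i,j,k)}_{\mathrm{CFL}}=\frac{2}{\frac{2\hbar}{m}\left(\frac{1}{(\Delta x)^2}+\frac{1}{(\Delta y)^2}+\frac{1}{(\Delta z)^2}\right)+\frac{1}{\hbar}\max_{a,b,c\in\{0,1\}}|U_{i+a,j+b,k+c}|}$$ and let $\Delta t^{(i,j,k)}_{\mathrm{CFL,gen}}$ be the generalized CFL limit of this single-cell region. Then $\Delta t^{(i,j,k)}_{\mathrm{CFL}}\le\Delta t^{(i,j,k)}_{\mathrm{CFL,gen}}$.
   Context: Fix constants $\hbar>0$, $m>0$, cell sizes $\Delta x,\Delta y,\Delta z>0$. For a single-cell region (one primary cell of size $\Delta x\times\Delta y\times\Delta z$, local nodes $(a+1,b+1,c+1)$, $a,b,c\in\{0,1\}$, ordered by $(a+1)+2b+4c$), let $D_U$ be the $8\times8$ diagonal matrix of the node potentials. Let $I_p$ be the $p\times p$ identity, $W_1=[-1\ \ 1]$, $\otimes$ the Kronecker product. Define $D_V''=\frac{\Delta x\Delta y\Delta z}{8}I_8$; $D=-[I_2\otimes I_2\otimes W_1^T\ \ I_2\otimes W_1^T\otimes I_2\ \ W_1^T\otimes I_2\otimes I_2]$; $D_S''=\mathrm{diag}(\frac{\Delta y\Delta z}{4}I_4,\frac{\Delta x\Delta z}{4}I_4,\frac{\Delta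 x\Delta y}{4}I_4)$; $D_l'=\mathrm{diag}(\Delta x I_4,\Delta y I_4,\Delta z I_4)$; $H=\frac{\hbar^2}{2m}D D_S''(D_l')^{-1}D^T+D_V''D_U$. The generalized CFL limit is $\Delta t_{\mathrm{CFL,gen}}=2/\rho\!\left(\frac{1}{\hbar}(D_V'')^{-1/2}H(D_V'')^{-1/2}\right)$, with $\rho$ the spectral radius. *)

theory Defs
  imports "Jordan_Normal_Form.Spectral_Radius" "Jordan_Normal_Form.Gauss_Jordan_Elimination"
begin

definition kron :: "real mat \<Rightarrow> real mat \<Rightarrow> real mat" where
  "kron A B = mat (dim_row A * dim_row B) (dim_col A * dim_col B)
     (\<lambda>(i,j). A $$ (i div dim_row B, j div dim_col B) * B $$ (i mod dim_row B, j mod dim_col B))"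

definition hcat :: "real mat \<Rightarrow> real mat \<Rightarrow> real mat" where
  "hcat A B = mat (dim_row A) (dim_col A + dim_col B)
     (\<lambda>(i,j). if j < dim_col A then A $$ (i,j) else B $$ (i, j - dim_col A))"

definition bdiag :: "real mat \<Rightarrow> real mat \<Rightarrow> real mat" where
  "bdiag A B = four_block_mat A (0\<^sub>m (dim_row A) (dim_col B)) (0\<^sub>m (dim_row B) (dim_col A)) B"

definition W1 :: "real mat" where
  "W1 = mat 1 2 (\<lambda>(i,j). if j = 0 then -1 else 1)"

definition Dmat :: "real mat" where
  "Dmat = - hcat (kron (1\<^sub>m 2) (kron (1\<^sub>m 2) (transpose_mat W1)))
            (hcat (kron (1\<^sub>m 2) (kron (transpose_mat W1) (1\<^sub>m 2)))
                  (kron (transpose_mat W1) (kron (1\<^sub>m 2) (1\<^sub>m 2))))"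

definition DV :: "real \<Rightarrow> real \<Rightarrow> real \<Rightarrow> real mat" where
  "DV dx dy dz = (dx * dy * dz / 8) \<cdot>\<^sub>m 1\<^sub>m 8"

definition DV_inv_sqrt :: "real \<Rightarrow> real \<Rightarrow> real \<Rightarrow> real mat" where
  "DV_inv_sqrt dx dy dz = (1 / sqrt (dx * dy * dz / 8)) \<cdot>\<^sub>m 1\<^sub>m 8"

definition DS :: "real \<Rightarrow> real \<Rightarrow> real \<Rightarrow> real mat" where
  "DS dx dy dz = bdiag ((dy * dz / 4) \<cdot>\<^sub>m 1\<^sub>m 4)
                   (bdiag ((dx * dz / 4) \<cdot>\<^sub>m 1\<^sub>m 4) ((dx * dy / 4) \<cdot>\<^sub>m 1\<^sub>m 4))"

definition Dl :: "real \<Rightarrow> real \<Rightarrow> real \<Rightarrow> real mat" where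
  "Dl dx dy dz = bdiag (dx \<cdot>\<^sub>m 1\<^sub>m 4) (bdiag (dy \<cdot>\<^sub>m 1\<^sub>m 4) (dz \<cdot>\<^sub>m 1\<^sub>m 4))"

text \<open>Node potentials: U a b c is the potential at local node (a+1,b+1,c+1), i.e. U_{i+a,j+b,k+c};
  the node with (0-based) index a + 2b + 4c is placed at diagonal position a + 2b + 4c.\<close>
definition DU :: "(nat \<Rightarrow> nat \<Rightarrow> nat \<Rightarrow> real) \<Rightarrow> real mat" where
  "DU U = mat 8 8 (\<lambda>(p,q). if p = q then U (p mod 2) ((p div 2) mod 2) (p div 4) else 0)"

definition Hmat :: "real \<Rightarrow> real \<Rightarrow> real \<Rightarrow> real \<Rightarrow> real \<Rightarrow> (nat \<Rightarrow> nat \<Rightarrow> nat \<Rightarrow> real) \<Rightarrow> real mat" where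
  "Hmat hbar m dx dy dz U =
     (hbar^2 / (2*m)) \<cdot>\<^sub>m (Dmat * DS dx dy dz * the (mat_inverse (Dl dx dy dz)) * transpose_mat Dmat)
     + DV dx dy dz * DU U"

definition dt_cfl_gen :: "real \<Rightarrow> real \<Rightarrow> real \<Rightarrow> real \<Rightarrow> real \<Rightarrow> (nat \<Rightarrow> nat \<Rightarrow> nat \<Rightarrow> real) \<Rightarrow> real" where
  "dt_cfl_gen hbar m dx dy dz U =
     2 / spectral_radius (map_mat complex_of_real
           ((1 / hbar) \<cdot>\<^sub>m (DV_inv_sqrt dx dy dz * Hmat hbar m dx dy dz U * DV_inv_sqrt dx dy dz)))"

definition dt_cfl :: "real \<Rightarrow> real \<Rightarrow> real \<Rightarrow> real \<Rightarrow> real \<Rightarrow> (nat \<Rightarrow> nat \<Rightarrow> nat \<Rightarrow> real) \<Rightarrow> real" where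
  "dt_cfl hbar m dx dy dz U =
     2 / ((2 * hbar / m) * (1 / dx^2 + 1 / dy^2 + 1 / dz^2)
          + (1 / hbar) * Max {\<bar>U a b c\<bar> | a b c. a \<in> {0,1} \<and> b \<in> {0,1} \<and> c \<in> {0,1}})"

end

theory Submission
  imports Defs
begin

text \<open>
  With a = hbar / (m dx^2), b = hbar / (m dy^2), c = hbar / (m dz^2), the matrix
  (1/hbar) D_V^(-1/2) H D_V^(-1/2) equals L + diag(U/hbar), where L is the Laplacian of the cube
  graph on the eight nodes with weight a on the x-edges, b on the y-edges and c on the z-edges.
  Every row of L + diag(U/hbar) has absolute sum |a + b + c + U_p/hbar| + a + b + c, which is at
  most 2(a + b + c) + max |U| / hbar, the denominator of the classical CFL bound; by the row-sum
  bound on eigenvalues this dominates the spectral radius.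
  The spectral radius is moreover positive (this matters because 2 / 0 = 0): a complex matrix
  whose eigenvalues all vanish is nilpotent by its Jordan form, and a nonzero real symmetric
  matrix is never nilpotent.
\<close>

lemma pow_mat_add:
  assumes "A \<in> carrier_mat n n"
  shows "A ^\<^sub>m (k + l) = A ^\<^sub>m k * A ^\<^sub>m l"
proof (induct l)
  case 0
  thus ?case using assms by (simp add: right_mult_one_mat[of _ n n])
next
  case (Suc l)
  have "A ^\<^sub>m (k + Suc l) = (A ^\<^sub>m k * A ^\<^sub>m l) * A" using Suc by simp
  also have "\<dots> = A ^\<^sub>m k * (A ^\<^sub>m l * A)"
    using assms by (intro assoc_mult_mat[of _ n n _ n _ n]) auto
  finally show ?case by simp
qed

lemma transpose_pow_mat_symmetric:
  assumes A: "(A :: 'a :: comm_semiring_1 mat) \<in> carrier_mat n n" and sym: "transpose_mat A = A"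
  shows "transpose_mat (A ^\<^sub>m k) = A ^\<^sub>m k"
proof (induct k)
  case 0
  thus ?case using A by simp
next
  case (Suc k)
  have "transpose_mat (A ^\<^sub>m Suc k) = A * A ^\<^sub>m k"
    using A Suc sym by (simp add: transpose_mult[of _ n n _ n])
  also have "\<dots> = A ^\<^sub>m Suc k"
    using pow_mat_add[OF A, of 1 k] A by (simp add: left_mult_one_mat)
  finally show ?case .
qed

lemma transpose_mult_self_eq_0:
  fixes A :: "'a :: linordered_idom mat"
  assumes A: "A \<in> carrier_mat n m" and gram: "transpose_mat A * A = 0\<^sub>m m m"
  shows "A = 0\<^sub>m n m"
proof (rule eq_matI)
  fix i j assume "i < dim_row (0\<^sub>m n m :: 'a mat)" "j < dim_col (0\<^sub>m n m :: 'a mat)"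
  hence ij: "i < n" "j < m" by auto
  have "(\<Sum>k\<in>{0..<n}. (A $$ (k,j))\<^sup>2) = (transpose_mat A * A) $$ (j,j)"
    using A ij by (simp add: scalar_prod_def power2_eq_square)
  also have "\<dots> = 0" using gram ij by simp
  finally have "\<forall>k\<in>{0..<n}. (A $$ (k,j))\<^sup>2 = 0"
    by (simp add: sum_nonneg_eq_0_iff)
  hence "(A $$ (i,j))\<^sup>2 = 0" using ij by simp
  thus "A $$ (i,j) = 0\<^sub>m n m $$ (i,j)" using ij by simp
qed (use A in auto)

lemma symmetric_nilpotent_eq_0:
  fixes A :: "'a :: linordered_idom mat"
  assumes A: "A \<in> carrier_mat n n" and sym: "transpose_mat A = A"
    and "0 < k" and "A ^\<^sub>m k = 0\<^sub>m n n"
  shows "A = 0\<^sub>m n n"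
  using assms(3,4)
proof (induct k rule: less_induct)
  case (less k)
  show ?case
  proof (cases "k = 1")
    case True
    thus ?thesis using less A by simp
  next
    case False
    define j where "j = k - 1"
    have j: "0 < j" "j < k" "k \<le> j + j" using less False unfolding j_def by auto
    \<comment> \<open>The Gram matrix of the symmetric matrix A^j is A^(2j), a multiple of A^k = 0.\<close>
    have "transpose_mat (A ^\<^sub>m j) * A ^\<^sub>m j = A ^\<^sub>m (j + j)"
      using transpose_pow_mat_symmetric[OF A sym] pow_mat_add[OF A, of j j] by simp
    also have "\<dots> = A ^\<^sub>m k * A ^\<^sub>m (j + j - k)"
      using pow_mat_add[OF A, of k "j + j - k"] j by simp
    also have "\<dots> = 0\<^sub>m n n" using less A by simp
    finally have "A ^\<^sub>m j = 0\<^sub>m n n"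
      by (rule transpose_mult_self_eq_0[rotated]) (use A in simp)
    thus ?thesis using less j by blast
  qed
qed

lemma diag_block_mat_eq_0:
  assumes "\<And>B. B \<in> set As \<Longrightarrow> B = 0\<^sub>m (dim_row B) (dim_col B)"
  shows "diag_block_mat As = 0\<^sub>m (sum_list (map dim_row As)) (sum_list (map dim_col As))"
  using assms
proof (induct As)
  case (Cons A As)
  have IH: "diag_block_mat As = 0\<^sub>m (sum_list (map dim_row As)) (sum_list (map dim_col As))"
    by (rule Cons.hyps) (simp add: Cons.prems)
  have "A = 0\<^sub>m (dim_row A) (dim_col A)" by (rule Cons.prems) simp
  hence "diag_block_mat (A # As) = four_block_mat (0\<^sub>m (dim_row A) (dim_col A))
      (0\<^sub>m (dim_row A) (sum_list (map dim_col As))) (0\<^sub>m (sum_list (map dim_row As)) (dim_col A))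
      (0\<^sub>m (sum_list (map dim_row As)) (sum_list (map dim_col As)))"
    unfolding diag_block_mat.simps Let_def IH by simp
  thus ?case by simp
qed simp

lemma jordan_block_0_pow_eq_0:
  "k \<le> r \<Longrightarrow> jordan_block k (0 :: 'a :: field) ^\<^sub>m r = 0\<^sub>m k k"
  unfolding jordan_block_zero_pow by (intro eq_matI) auto

lemma jordan_matrix_pow_eq_0:
  assumes "\<And>k a. (k, a) \<in> set n_as \<Longrightarrow> a = 0 \<and> k \<le> r"
  shows "jordan_matrix n_as ^\<^sub>m r
    = (0\<^sub>m (sum_list (map fst n_as)) (sum_list (map fst n_as)) :: 'a :: field mat)"
proof -
  let ?blocks = "map (\<lambda>(k, a). jordan_block k a ^\<^sub>m r) n_as"
  have "B = 0\<^sub>m (dim_row B) (dim_col B)" if "B \<in> set ?blocks" for B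
  proof -
    from \<open>B \<in> set ?blocks\<close> obtain k a
      where "(k, a) \<in> set n_as" and B: "B = jordan_block k a ^\<^sub>m r" by auto
    with assms have "a = 0" "k \<le> r" by auto
    hence "B = 0\<^sub>m k k" unfolding B using jordan_block_0_pow_eq_0 by simp
    thus ?thesis by simp
  qed
  hence "diag_block_mat ?blocks = 0\<^sub>m (sum_list (map dim_row ?blocks)) (sum_list (map dim_col ?blocks))"
    by (rule diag_block_mat_eq_0)
  moreover have "map dim_row ?blocks = map fst n_as" "map dim_col ?blocks = map fst n_as"
    by auto
  ultimately show ?thesis unfolding jordan_matrix_pow by metis
qed

lemma nilpotent_if_eigenvalues_0:
  fixes A :: "complex mat"
  assumes A: "A \<in> carrier_mat n n" and ev0: "\<And>l. eigenvalue A l \<Longrightarrow> l = 0"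
  shows "A ^\<^sub>m n = 0\<^sub>m n n"
proof -
  obtain as where "char_poly A = (\<Prod>a\<leftarrow>as. [:- a, 1:])"
    using char_poly_factorized[OF A] by blast
  then obtain n_as where jnf: "jordan_nf A n_as"
    using jordan_nf_exists[OF A] by blast
  obtain P Q where PQ: "P \<in> carrier_mat n n" "Q \<in> carrier_mat n n"
    and cp: "char_poly A = (\<Prod>(k, a)\<leftarrow>n_as. [:- a, 1:] ^ k)"
    and pow: "\<And>r. A ^\<^sub>m r = P * jordan_matrix n_as ^\<^sub>m r * Q"
    using jordan_nf_powE[OF A jnf] by blast
  have "similar_mat A (jordan_matrix n_as)" using jnf unfolding jordan_nf_def by simp
  from similar_matD[OF this] obtain n' where
    "A \<in> carrier_mat n' n'" "jordan_matrix n_as \<in> carrier_mat n' n'" by auto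
  hence dim: "sum_list (map fst n_as) = n" using A by (metis carrier_matD(1) jordan_matrix_dim(1))
  have blocks: "a = 0 \<and> k \<le> n" if block: "(k, a) \<in> set n_as" for k a
  proof
    have "0 < k" using jnf block unfolding jordan_nf_def by force
    have "poly (char_poly A) a = (\<Prod>x\<leftarrow>n_as. (a - snd x) ^ fst x)"
      unfolding cp poly_prod_list by (simp add: o_def case_prod_beta)
    also have "\<dots> = 0"
      unfolding prod_list_zero_iff using block \<open>0 < k\<close> by force
    finally have "eigenvalue A a" using eigenvalue_root_char_poly[OF A] by simp
    thus "a = 0" by (rule ev0)
    show "k \<le> n" using block dim member_le_sum_list[of k "map fst n_as"] by force
  qed
  have "jordan_matrix n_as ^\<^sub>m n = 0\<^sub>m n n"
    using jordan_matrix_pow_eq_0[OF blocks] dim by simp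
  thus ?thesis using pow PQ by simp
qed

lemma spectral_radius_pos_if_symmetric:
  fixes B :: "real mat"
  assumes B: "B \<in> carrier_mat n n" and sym: "transpose_mat B = B" and nz: "B \<noteq> 0\<^sub>m n n"
  shows "0 < spectral_radius (map_mat complex_of_real B)"
proof (rule ccontr)
  let ?A = "map_mat complex_of_real B"
  have A: "?A \<in> carrier_mat n n" using B by simp
  have "0 < n"
  proof (rule gr0I)
    assume "n = 0"
    hence "B = 0\<^sub>m n n" using B by (intro eq_matI) auto
    with nz show False ..
  qed
  assume "\<not> 0 < spectral_radius ?A"
  have "l = 0" if "eigenvalue ?A l" for l
  proof -
    have "norm l \<le> spectral_radius ?A"
      using spectral_radius_mem_max(2)[OF A \<open>0 < n\<close>] that unfolding spectrum_def by auto
    hence "norm l \<le> 0" using \<open>\<not> 0 < spectral_radius ?A\<close> by linarith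
    thus "l = 0" by simp
  qed
  hence "?A ^\<^sub>m n = 0\<^sub>m n n" by (rule nilpotent_if_eigenvalues_0[OF A])
  have "map_mat complex_of_real (B ^\<^sub>m n) = ?A ^\<^sub>m n" by (rule of_real_hom.mat_hom_pow[OF B])
  also have "\<dots> = 0\<^sub>m n n" by fact
  also have "\<dots> = map_mat complex_of_real (0\<^sub>m n n)" by (intro eq_matI) auto
  finally have "B ^\<^sub>m n = 0\<^sub>m n n" by (rule of_real_hom.mat_hom_inj)
  with symmetric_nilpotent_eq_0[OF B sym \<open>0 < n\<close>] nz show False by blast
qed

lemma eigenvalue_norm_le_row_sum:
  fixes A :: "'a :: real_normed_field mat"
  assumes A: "A \<in> carrier_mat n n" and ev: "eigenvalue A l"
    and rows: "\<And>i. i < n \<Longrightarrow> (\<Sum>j<n. norm (A $$ (i,j))) \<le> R"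
  shows "norm l \<le> R"
proof -
  from ev obtain v where v: "v \<in> carrier_vec n" "v \<noteq> 0\<^sub>v n" "A *\<^sub>v v = l \<cdot>\<^sub>v v"
    unfolding eigenvalue_def eigenvector_def using A by auto
  \<comment> \<open>Read off the eigen-equation in a row where the eigenvector has a component of maximal norm.\<close>
  let ?norms = "(\<lambda>j. norm (v $ j)) ` {..<n}"
  have "0 < n"
  proof (rule gr0I)
    assume "n = 0"
    hence "v = 0\<^sub>v n" using v(1) by (intro eq_vecI) auto
    with v(2) show False ..
  qed
  hence "Max ?norms \<in> ?norms" by (intro Max_in) auto
  then obtain i where i: "i < n" and "norm (v $ i) = Max ?norms" by auto
  hence max: "norm (v $ j) \<le> norm (v $ i)" if "j < n" for j
    using that by simp
  have "v $ i \<noteq> 0"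
  proof
    assume "v $ i = 0"
    hence "v = 0\<^sub>v n" using max v(1) by (intro eq_vecI) auto
    with v(2) show False ..
  qed
  have "norm l * norm (v $ i) = norm ((A *\<^sub>v v) $ i)"
    using v i by (simp add: norm_mult)
  also have "\<dots> = norm (\<Sum>j<n. A $$ (i,j) * v $ j)"
    using A v(1) i by (simp add: scalar_prod_def lessThan_atLeast0)
  also have "\<dots> \<le> (\<Sum>j<n. norm (A $$ (i,j)) * norm (v $ j))"
    by (rule order.trans[OF norm_sum]) (simp add: norm_mult)
  also have "\<dots> \<le> (\<Sum>j<n. norm (A $$ (i,j)) * norm (v $ i))"
    by (intro sum_mono mult_left_mono max) auto
  also have "\<dots> \<le> R * norm (v $ i)"
    unfolding sum_distrib_right[symmetric] by (intro mult_right_mono rows i) simp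
  finally show ?thesis using \<open>v $ i \<noteq> 0\<close> by simp
qed

lemma spectral_radius_le_row_sum:
  assumes A: "A \<in> carrier_mat n n" and "0 < n"
    and rows: "\<And>i. i < n \<Longrightarrow> (\<Sum>j<n. norm (A $$ (i,j))) \<le> R"
  shows "spectral_radius A \<le> R"
proof -
  have "spectral_radius A \<in> norm ` spectrum A"
    by (rule spectral_radius_mem_max(1)[OF A \<open>0 < n\<close>])
  then obtain l where "eigenvalue A l" "spectral_radius A = norm l"
    unfolding spectrum_def by auto
  with eigenvalue_norm_le_row_sum[OF A _ rows] show ?thesis by simp
qed

text \<open>Edges 0-3, 4-7 and 8-11 are the x-, y- and z-edges, numbered in the column order of Dmat.\<close>

definition edge_base :: "nat \<Rightarrow> nat" where
  "edge_base e =
     (if e < 4 then 2 * e else if e < 8 then 4 * ((e - 4) div 2) + (e - 4) mod 2 else e - 8)"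

definition edge_step :: "nat \<Rightarrow> nat" where
  "edge_step e = (if e < 4 then 1 else if e < 8 then 2 else 4)"

definition cell_incidence :: "nat \<Rightarrow> nat \<Rightarrow> real" where
  "cell_incidence p e =
     (if p = edge_base e then 1 else if p = edge_base e + edge_step e then -1 else 0)"

definition edge_weight :: "'a \<Rightarrow> 'a \<Rightarrow> 'a \<Rightarrow> nat \<Rightarrow> 'a" where
  "edge_weight a b c e = (if e < 4 then a else if e < 8 then b else c)"

definition x_neighbour :: "nat \<Rightarrow> nat" where
  "x_neighbour p = (if even p then p + 1 else p - 1)"

definition y_neighbour :: "nat \<Rightarrow> nat" where
  "y_neighbour p = (if even (p div 2) then p + 2 else p - 2)"

definition z_neighbour :: "nat \<Rightarrow> nat" where
  "z_neighbour p = (if p < 4 then p + 4 else p - 4)"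

definition cube_laplacian :: "real \<Rightarrow> real \<Rightarrow> real \<Rightarrow> real mat" where
  "cube_laplacian a b c = mat 8 8 (\<lambda>(p, q).
     if p = q then a + b + c
     else if q = x_neighbour p then - a
     else if q = y_neighbour p then - b
     else if q = z_neighbour p then - c
     else 0)"

lemma less_8_cases: "(p :: nat) < 8 \<longleftrightarrow> p \<in> {0, 1, 2, 3, 4, 5, 6, 7}"
  by (auto simp: eval_nat_numeral less_Suc_eq)

lemma less_12_cases: "(e :: nat) < 12 \<longleftrightarrow> e \<in> {0, 1, 2, 3, 4, 5, 6, 7, 8, 9, 10, 11}"
  by (auto simp: eval_nat_numeral less_Suc_eq)

lemma sum_lessThan_12:
  "(\<Sum>e<(12::nat). f e)
    = f 0 + f 1 + f 2 + f 3 + f 4 + f 5 + f 6 + f 7 + f 8 + f 9 + f 10 + (f 11 :: 'a :: comm_monoid_add)"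
  by (simp add: eval_nat_numeral ac_simps)

lemma sum_lessThan_8:
  "(\<Sum>q<(8::nat). f q) = f 0 + f 1 + f 2 + f 3 + f 4 + f 5 + f 6 + (f 7 :: 'a :: comm_monoid_add)"
  by (simp add: eval_nat_numeral ac_simps)

lemma Dmat_eq: "Dmat = mat 8 12 (\<lambda>(p, e). cell_incidence p e)"
proof (rule eq_matI)
  fix p e assume "p < dim_row (mat 8 12 (\<lambda>(p, e). cell_incidence p e))"
    "e < dim_col (mat 8 12 (\<lambda>(p, e). cell_incidence p e))"
  hence "p < 8" "e < 12" by auto
  thus "Dmat $$ (p, e) = mat 8 12 (\<lambda>(p, e). cell_incidence p e) $$ (p, e)"
    unfolding less_8_cases less_12_cases
    by (auto simp: Dmat_def hcat_def kron_def W1_def cell_incidence_def edge_base_def edge_step_def)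
qed (auto simp: Dmat_def hcat_def kron_def W1_def)

lemma Dmat_weighted_gram:
  "Dmat * mat_diag 12 (edge_weight a b c) * transpose_mat Dmat = cube_laplacian a b c"
proof (rule eq_matI)
  fix p q assume "p < dim_row (cube_laplacian a b c)" "q < dim_col (cube_laplacian a b c)"
  hence pq: "p < 8" "q < 8" by (auto simp: cube_laplacian_def)
  have DW: "Dmat * mat_diag 12 (edge_weight a b c)
      = mat 8 12 (\<lambda>(p, e). cell_incidence p e * edge_weight a b c e)"
    unfolding Dmat_eq by (subst mat_diag_mult_right) auto
  have "(Dmat * mat_diag 12 (edge_weight a b c) * transpose_mat Dmat) $$ (p, q)
      = (\<Sum>e<12. cell_incidence p e * edge_weight a b c e * cell_incidence q e)"
    unfolding DW using pq by (simp add: Dmat_eq scalar_prod_def lessThan_atLeast0)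
  also have "\<dots> = cube_laplacian a b c $$ (p, q)"
    using pq unfolding less_8_cases sum_lessThan_12
    by (elim insertE emptyE; simp add: cube_laplacian_def cell_incidence_def edge_base_def
        edge_step_def edge_weight_def x_neighbour_def y_neighbour_def z_neighbour_def)
  finally show "(Dmat * mat_diag 12 (edge_weight a b c) * transpose_mat Dmat) $$ (p, q)
      = cube_laplacian a b c $$ (p, q)" .
qed (auto simp: Dmat_eq cube_laplacian_def)

lemma mat_inverse_mat_diag:
  assumes "\<And>i. i < n \<Longrightarrow> f i \<noteq> 0"
  shows "mat_inverse (mat_diag n f) = Some (mat_diag n (\<lambda>i. inverse (f i :: 'a :: field)))"
proof -
  let ?D = "mat_diag n f" and ?E = "mat_diag n (\<lambda>i. inverse (f i))"
  have DE: "?D * ?E = 1\<^sub>m n" and ED: "?E * ?D = 1\<^sub>m n"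
    unfolding mat_diag_diag using assms by (auto simp: mat_diag_def intro!: eq_matI)
  have "?D \<in> Units (ring_mat TYPE('a) n undefined)"
    using DE ED unfolding Units_def by (auto simp: ring_mat_def simp del: mat_diag_diag)
  moreover have "mat_inverse ?D = None \<Longrightarrow> ?D \<notin> Units (ring_mat TYPE('a) n undefined)"
    by (rule mat_inverse(1)[OF mat_diag_dim])
  ultimately obtain B where B: "mat_inverse ?D = Some B" by fastforce
  with mat_inverse(2)[OF mat_diag_dim] have DB: "?D * B = 1\<^sub>m n" and "B \<in> carrier_mat n n"
    by auto
  have "B = (?E * ?D) * B" unfolding ED using \<open>B \<in> carrier_mat n n\<close> by simp
  also have "\<dots> = ?E * (?D * B)"
    using \<open>B \<in> carrier_mat n n\<close> by (intro assoc_mult_mat[of _ n n _ n _ n]) auto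
  also have "\<dots> = ?E" by (simp add: DB right_mult_one_mat[of _ n n])
  finally show ?thesis using B by simp
qed

lemma DS_eq: "DS dx dy dz = mat_diag 12 (edge_weight (dy * dz / 4) (dx * dz / 4) (dx * dy / 4))"
  by (intro eq_matI) (auto simp: DS_def bdiag_def mat_diag_def edge_weight_def index_mat_four_block)

lemma Dl_eq: "Dl dx dy dz = mat_diag 12 (edge_weight dx dy dz)"
  by (intro eq_matI) (auto simp: Dl_def bdiag_def mat_diag_def edge_weight_def index_mat_four_block)

definition node_potential :: "(nat \<Rightarrow> nat \<Rightarrow> nat \<Rightarrow> real) \<Rightarrow> nat \<Rightarrow> real" where
  "node_potential U p = U (p mod 2) ((p div 2) mod 2) (p div 4)"

lemma DU_eq: "DU U = mat_diag 8 (node_potential U)"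
  by (intro eq_matI) (auto simp: DU_def mat_diag_def node_potential_def)

lemma Hmat_eq:
  assumes "dx \<noteq> 0" "dy \<noteq> 0" "dz \<noteq> 0"
  shows "Hmat hbar m dx dy dz U
    = (hbar\<^sup>2 / (2 * m))
        \<cdot>\<^sub>m cube_laplacian (dy * dz / (4 * dx)) (dx * dz / (4 * dy)) (dx * dy / (4 * dz))
      + (dx * dy * dz / 8) \<cdot>\<^sub>m DU U"
proof -
  let ?w = "edge_weight (dy * dz / (4 * dx)) (dx * dz / (4 * dy)) (dx * dy / (4 * dz))"
  let ?inv = "mat_diag 12 (\<lambda>e. inverse (edge_weight dx dy dz e))"
  have inv: "the (mat_inverse (Dl dx dy dz)) = ?inv"
    unfolding Dl_eq using assms by (subst mat_inverse_mat_diag) (auto simp: edge_weight_def)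
  have "(\<lambda>e. edge_weight (dy * dz / 4) (dx * dz / 4) (dx * dy / 4) e
      * inverse (edge_weight dx dy dz e)) = ?w"
    by (auto simp: edge_weight_def field_simps)
  hence "DS dx dy dz * ?inv = mat_diag 12 ?w"
    unfolding DS_eq mat_diag_diag by simp
  hence "Dmat * DS dx dy dz * the (mat_inverse (Dl dx dy dz)) = Dmat * mat_diag 12 ?w"
    unfolding inv by (subst assoc_mult_mat[of _ 8 12 _ 12 _ 12]) (auto simp: Dmat_eq DS_eq)
  moreover have "DV dx dy dz * DU U = (dx * dy * dz / 8) \<cdot>\<^sub>m DU U"
    unfolding DV_def DU_eq by (simp add: mult_smult_assoc_mat[of _ 8 8 _ 8] left_mult_one_mat[of _ 8 8])
  ultimately show ?thesis unfolding Hmat_def by (simp add: Dmat_weighted_gram)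
qed

lemma smult_cube_laplacian: "k \<cdot>\<^sub>m cube_laplacian a b c = cube_laplacian (k * a) (k * b) (k * c)"
  by (intro eq_matI) (auto simp: cube_laplacian_def algebra_simps)

lemma smult_one_mult_smult_one:
  assumes "A \<in> carrier_mat n n"
  shows "(s \<cdot>\<^sub>m 1\<^sub>m n) * A * (s \<cdot>\<^sub>m 1\<^sub>m n) = (s * s :: 'a :: comm_ring_1) \<cdot>\<^sub>m A"
proof -
  have "(s \<cdot>\<^sub>m 1\<^sub>m n) * A * (s \<cdot>\<^sub>m 1\<^sub>m n) = (s \<cdot>\<^sub>m A) * (s \<cdot>\<^sub>m 1\<^sub>m n)"
    using assms by (simp add: mult_smult_assoc_mat[of _ n n _ n] left_mult_one_mat)
  also have "\<dots> = s \<cdot>\<^sub>m (s \<cdot>\<^sub>m A)"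
    using assms by (simp add: mult_smult_assoc_mat[of _ n n _ n] mult_smult_distrib[of _ n n _ n]
        right_mult_one_mat)
  also have "\<dots> = (s * s) \<cdot>\<^sub>m A"
    by (intro eq_matI) (auto simp: mult.assoc)
  finally show ?thesis .
qed

lemma scaled_Hmat_eq:
  assumes "hbar > 0" "m > 0" "dx > 0" "dy > 0" "dz > 0"
  shows "(1 / hbar) \<cdot>\<^sub>m (DV_inv_sqrt dx dy dz * Hmat hbar m dx dy dz U * DV_inv_sqrt dx dy dz)
    = cube_laplacian (hbar / (m * dx\<^sup>2)) (hbar / (m * dy\<^sup>2)) (hbar / (m * dz\<^sup>2))
      + mat_diag 8 (\<lambda>p. node_potential U p / hbar)"
proof -
  let ?L = "cube_laplacian (dy * dz / (4 * dx)) (dx * dz / (4 * dy)) (dx * dy / (4 * dz))"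
  let ?s = "1 / sqrt (dx * dy * dz / 8)"
  let ?k = "1 / hbar * (?s * ?s)"
  have H: "Hmat hbar m dx dy dz U = (hbar\<^sup>2 / (2 * m)) \<cdot>\<^sub>m ?L + (dx * dy * dz / 8) \<cdot>\<^sub>m DU U"
    using assms by (intro Hmat_eq) auto
  have s: "?s * ?s = 8 / (dx * dy * dz)" using assms by (simp add: field_simps)
  have "(1 / hbar) \<cdot>\<^sub>m (DV_inv_sqrt dx dy dz * Hmat hbar m dx dy dz U * DV_inv_sqrt dx dy dz)
      = (?k * (hbar\<^sup>2 / (2 * m))) \<cdot>\<^sub>m ?L + (?k * (dx * dy * dz / 8)) \<cdot>\<^sub>m DU U"
    unfolding DV_inv_sqrt_def H
    by (subst smult_one_mult_smult_one[of _ 8])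
      (auto simp: cube_laplacian_def DU_def algebra_simps intro!: eq_matI)
  also have "\<dots> = cube_laplacian (hbar / (m * dx\<^sup>2)) (hbar / (m * dy\<^sup>2)) (hbar / (m * dz\<^sup>2))
      + mat_diag 8 (\<lambda>p. node_potential U p / hbar)"
    unfolding smult_cube_laplacian DU_eq s using assms
    by (auto simp: mat_diag_def power2_eq_square field_simps
        intro!: eq_matI arg_cong3[where f = cube_laplacian])
  finally show ?thesis .
qed

lemma transpose_cube_laplacian_plus_diag:
  "transpose_mat (cube_laplacian a b c + mat_diag 8 v) = cube_laplacian a b c + mat_diag 8 v"
proof (rule eq_matI)
  fix p q assume "p < dim_row (cube_laplacian a b c + mat_diag 8 v)"
    "q < dim_col (cube_laplacian a b c + mat_diag 8 v)"
  hence "p < 8" "q < 8" by (auto simp: cube_laplacian_def mat_diag_def)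
  thus "transpose_mat (cube_laplacian a b c + mat_diag 8 v) $$ (p, q)
      = (cube_laplacian a b c + mat_diag 8 v) $$ (p, q)"
    unfolding less_8_cases
    by (elim insertE emptyE; simp add: cube_laplacian_def mat_diag_def
        x_neighbour_def y_neighbour_def z_neighbour_def)
qed (auto simp: cube_laplacian_def mat_diag_def)

lemma cube_laplacian_plus_diag_row_sum:
  assumes "p < 8" "0 \<le> a" "0 \<le> b" "0 \<le> c"
  shows "(\<Sum>q<8. \<bar>(cube_laplacian a b c + mat_diag 8 v) $$ (p, q)\<bar>)
    \<le> 2 * (a + b + c) + \<bar>v p\<bar>"
proof -
  have "(\<Sum>q<8. \<bar>(cube_laplacian a b c + mat_diag 8 v) $$ (p, q)\<bar>)
      = \<bar>a + b + c + v p\<bar> + \<bar>a\<bar> + \<bar>b\<bar> + \<bar>c\<bar>"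
    using \<open>p < 8\<close> unfolding less_8_cases sum_lessThan_8
    by (elim insertE emptyE; simp add: cube_laplacian_def mat_diag_def
        x_neighbour_def y_neighbour_def z_neighbour_def algebra_simps)
  also have "\<dots> \<le> 2 * (a + b + c) + \<bar>v p\<bar>"
    using assms abs_triangle_ineq[of "a + b + c" "v p"] by simp
  finally show ?thesis .
qed

lemma cube_laplacian_plus_diag_neq_0:
  assumes "a \<noteq> 0"
  shows "cube_laplacian a b c + mat_diag 8 v \<noteq> 0\<^sub>m 8 8"
proof
  assume "cube_laplacian a b c + mat_diag 8 v = 0\<^sub>m 8 8"
  moreover have "(cube_laplacian a b c + mat_diag 8 v) $$ (0, 1) = - a"
    by (simp add: cube_laplacian_def mat_diag_def x_neighbour_def)
  ultimately show False using assms by simp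
qed

lemma abs_node_potential_le_Max:
  assumes "p < 8"
  shows "\<bar>node_potential U p\<bar>
    \<le> Max {\<bar>U a b c\<bar> | a b c. a \<in> {0,1} \<and> b \<in> {0,1} \<and> c \<in> {0,1}}"
proof (rule Max_ge)
  have "{\<bar>U a b c\<bar> | a b c. a \<in> {0,1} \<and> b \<in> {0,1} \<and> c \<in> {0,1}}
      \<subseteq> (\<lambda>(a, b, c). \<bar>U a b c\<bar>) ` ({0,1} \<times> {0,1} \<times> {0,1})" by force
  thus "finite {\<bar>U a b c\<bar> | a b c. a \<in> {0,1} \<and> b \<in> {0,1} \<and> c \<in> {0,1}}"
    by (rule finite_subset) simp
  show "\<bar>node_potential U p\<bar>
    \<in> {\<bar>U a b c\<bar> | a b c. a \<in> {0,1} \<and> b \<in> {0,1} \<and> c \<in> {0,1}}"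
    using assms unfolding node_potential_def by fastforce
qed

theorem lemma6:
  fixes hbar m dx dy dz :: real and U :: "nat \<Rightarrow> nat \<Rightarrow> nat \<Rightarrow> real"
  assumes "hbar > 0" and "m > 0" and "dx > 0" and "dy > 0" and "dz > 0"
  shows "dt_cfl hbar m dx dy dz U \<le> dt_cfl_gen hbar m dx dy dz U"
proof -
  define a b c
    where "a = hbar / (m * dx\<^sup>2)" and "b = hbar / (m * dy\<^sup>2)" and "c = hbar / (m * dz\<^sup>2)"
  define M where "M = Max {\<bar>U a b c\<bar> | a b c. a \<in> {0,1} \<and> b \<in> {0,1} \<and> c \<in> {0,1}}"
  define B where "B = cube_laplacian a b c + mat_diag 8 (\<lambda>p. node_potential U p / hbar)"
  let ?\<rho> = "spectral_radius (map_mat complex_of_real B)"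
  have abc: "0 < a" "0 < b" "0 < c" unfolding a_def b_def c_def using assms by simp_all
  have B: "B \<in> carrier_mat 8 8" by (simp add: B_def cube_laplacian_def)
  have gen: "dt_cfl_gen hbar m dx dy dz U = 2 / ?\<rho>"
    unfolding dt_cfl_gen_def scaled_Hmat_eq[OF assms] B_def a_def b_def c_def ..
  have "(2 * hbar / m) * (1 / dx\<^sup>2 + 1 / dy\<^sup>2 + 1 / dz\<^sup>2) + (1 / hbar) * M
      = 2 * (a + b + c) + M / hbar"
    unfolding a_def b_def c_def using assms by (simp add: field_simps)
  hence cfl: "dt_cfl hbar m dx dy dz U = 2 / (2 * (a + b + c) + M / hbar)"
    unfolding dt_cfl_def M_def by simp
  have "?\<rho> \<le> 2 * (a + b + c) + M / hbar"
  proof (rule spectral_radius_le_row_sum[of _ 8])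
    fix p :: nat assume p: "p < 8"
    have "(\<Sum>q<8. norm (map_mat complex_of_real B $$ (p, q))) = (\<Sum>q<8. \<bar>B $$ (p, q)\<bar>)"
      using B p by simp
    also have "\<dots> \<le> 2 * (a + b + c) + \<bar>node_potential U p / hbar\<bar>"
      unfolding B_def using p abc by (intro cube_laplacian_plus_diag_row_sum) auto
    also have "\<dots> \<le> 2 * (a + b + c) + M / hbar"
      using abs_node_potential_le_Max[OF p] assms(1) unfolding M_def by (simp add: divide_right_mono)
    finally show "(\<Sum>q<8. norm (map_mat complex_of_real B $$ (p, q)))
        \<le> 2 * (a + b + c) + M / hbar" .
  qed (use B in auto)
  moreover have "0 < ?\<rho>"
    using B abc unfolding B_def
    by (intro spectral_radius_pos_if_symmetric[of _ 8] transpose_cube_laplacian_plus_diag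
        cube_laplacian_plus_diag_neq_0) auto
  ultimately show ?thesis unfolding gen cfl by (intro divide_left_mono) auto
qed

end
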